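(* Let $\Gamma=\langle V,(w_u)_{u\in V},\alpha,\beta\rangle$ be a celebrity game with $\beta>1$, $n=|V|$, $W=\sum_{u\in V}w_u$ and $w_{\max}=\max_u w_u$. The edgeless graph $I_n$ on $V$ is the unique Nash equilibrium graph of $\Gamma$ if and only if $\alpha\ge w_{\max}$ and there is more than one vertex $u\in V$ such that $\alpha>W-w_u$.
   Context: A celebrity game $\Gamma=\langle V,(w_u)_{u\in V},\alpha,\beta\rangle$ consists of a set of players $V=\{1,\dots,n\}$, celebrity weights $w_u>0$, a link cost $\alpha>0$ and a critical distance $\beta$ with $1\le\beta\le n-1$. A strategy of player $u$ is a set $S_u\subseteq V\setminus\{u\}$; a strategy profile is $S=(S_1,\dots,S_n)$; its outcome graph $G[S]$ is the undirected graph on $V$ with edge set $\{\{u,v\}: u\in S_v\text{ or }v\in S_u\}$. With $d_G$ the graph distance (infinite between different connected components), the cost of player $u$ is $c_u(S)=\alpha|S_u|+\sum_{v:\,d_{G[S]}(u,v)>\beta}w_v$. $S$ is a Nash equilibrium if no player can strictly decrease its cost by changing only its own strategy; a graph $G$ is a Nash equilibrium graph of $\Gamma$ if $G=G[S]$ for some Nash equilibrium $S$. *)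

theory Defs
  imports Main "HOL-Library.Extended_Nat"
begin

text \<open>Players are V = {1..n}; a strategy profile is a function S with S u a subset of V - {u}.
Graphs on V are represented by their edge sets (sets of two-element sets).\<close>

definition players :: "nat \<Rightarrow> nat set" where
  "players n = {1..n}"

definition is_profile :: "nat \<Rightarrow> (nat \<Rightarrow> nat set) \<Rightarrow> bool" where
  "is_profile n S \<longleftrightarrow> (\<forall>u\<in>players n. S u \<subseteq> players n - {u})"

definition outcome_graph :: "nat \<Rightarrow> (nat \<Rightarrow> nat set) \<Rightarrow> nat set set" where
  "outcome_graph n S = {{u, v} | u v. u \<in> players n \<and> v \<in> S u}"

definition walk :: "nat set set \<Rightarrow> nat list \<Rightarrow> bool" where
  "walk E xs \<longleftrightarrow> xs \<noteq> [] \<and> (\<forall>i < length xs - 1. {xs ! i, xs ! Suc i} \<in> E)"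

text \<open>Graph distance (infinite if no walk exists).\<close>
definition gdist :: "nat set set \<Rightarrow> nat \<Rightarrow> nat \<Rightarrow> enat" where
  "gdist E u v = (INF xs \<in> {xs. walk E xs \<and> hd xs = u \<and> last xs = v}. enat (length xs - 1))"

definition cost :: "nat \<Rightarrow> (nat \<Rightarrow> real) \<Rightarrow> real \<Rightarrow> nat \<Rightarrow> (nat \<Rightarrow> nat set) \<Rightarrow> nat \<Rightarrow> real" where
  "cost n w \<alpha> \<beta> S u = \<alpha> * real (card (S u))
     + (\<Sum>v \<in> {v \<in> players n. gdist (outcome_graph n S) u v > enat \<beta>}. w v)"

definition nash_eq :: "nat \<Rightarrow> (nat \<Rightarrow> real) \<Rightarrow> real \<Rightarrow> nat \<Rightarrow> (nat \<Rightarrow> nat set) \<Rightarrow> bool" where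
  "nash_eq n w \<alpha> \<beta> S \<longleftrightarrow> is_profile n S \<and>
     (\<forall>u \<in> players n. \<forall>T. T \<subseteq> players n - {u} \<longrightarrow>
        cost n w \<alpha> \<beta> S u \<le> cost n w \<alpha> \<beta> (S(u := T)) u)"

definition nash_eq_graph :: "nat \<Rightarrow> (nat \<Rightarrow> real) \<Rightarrow> real \<Rightarrow> nat \<Rightarrow> nat set set \<Rightarrow> bool" where
  "nash_eq_graph n w \<alpha> \<beta> E \<longleftrightarrow> (\<exists>S. nash_eq n w \<alpha> \<beta> S \<and> outcome_graph n S = E)"

end

theory Submission imports Defs begin

text \<open>
Call a player \<open>u\<close> link-averse if \<open>\<alpha> > W - w u\<close>: one link costs it more than all other
players weigh. If there are two link-averse players \<open>u\<^sub>1, u\<^sub>2\<close>, then in an equilibrium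
neither buys a link and nobody buys more than one, so the outcome graph is a functional graph in
which \<open>u\<^sub>1, u\<^sub>2\<close> are sinks. A buyer must reach both of them (otherwise it pays more than
\<open>W\<close>), but following the out-links from it leads to only one sink. Conversely, if at most one
player is link-averse, the star centred at that player (or at any player) is a nonempty
equilibrium for \<open>\<beta> \<ge> 2\<close>. Finally \<open>I\<^sub>n\<close> is an equilibrium iff no player gains by linking to
a single other player, i.e. iff \<open>\<alpha> \<ge> w\<^sub>m\<^sub>a\<^sub>x\<close>.
\<close>

section \<open>Walks and distances\<close>

lemma walk_Cons: "walk E (z # ys) \<longleftrightarrow> ys = [] \<or> walk E ys \<and> {z, hd ys} \<in> E"
  unfolding walk_def by (cases ys) (auto simp: less_Suc_eq_0_disj nth_Cons split: nat.splits)

lemma walk_endpoints_in_edges: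
  assumes "walk E xs" and "hd xs \<noteq> last xs"
  shows "hd xs \<in> \<Union>E \<and> last xs \<in> \<Union>E"
  using assms
proof (induction xs)
  case Nil
  then show ?case by (simp add: walk_def)
next
  case (Cons z ys)
  then have "ys \<noteq> []" by auto
  with Cons.prems have "walk E ys" "{z, hd ys} \<in> E" by (auto simp: walk_Cons)
  with Cons.IH \<open>ys \<noteq> []\<close> show ?case by (cases "hd ys = last ys") auto
qed

lemma gdist_le_walk:
  "walk E xs \<Longrightarrow> hd xs = u \<Longrightarrow> last xs = v \<Longrightarrow> gdist E u v \<le> enat (length xs - 1)"
  unfolding gdist_def by (rule INF_lower) auto

lemma gdist_self [simp]: "gdist E u u = 0"
  using gdist_le_walk[of E "[u]" u u] by (simp add: walk_def flip: zero_enat_def)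

lemma gdist_eq_infinity_iff:
  "gdist E u v = \<infinity> \<longleftrightarrow> \<not> (\<exists>xs. walk E xs \<and> hd xs = u \<and> last xs = v)"
proof
  assume "gdist E u v = \<infinity>"
  then show "\<not> (\<exists>xs. walk E xs \<and> hd xs = u \<and> last xs = v)"
    using gdist_le_walk by fastforce
next
  assume "\<not> (\<exists>xs. walk E xs \<and> hd xs = u \<and> last xs = v)"
  then have "{xs. walk E xs \<and> hd xs = u \<and> last xs = v} = {}" by blast
  then show "gdist E u v = \<infinity>" unfolding gdist_def by (metis INF_empty top_enat_def image_empty)
qed

lemma gdist_isolated: "u \<noteq> v \<Longrightarrow> u \<notin> \<Union>E \<or> v \<notin> \<Union>E \<Longrightarrow> gdist E u v = \<infinity>"
  using walk_endpoints_in_edges by (fastforce simp: gdist_eq_infinity_iff)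

lemma walk_funpow_fixpoint:
  assumes "E \<subseteq> range (\<lambda>v. {v, g v})"
  shows "walk E xs \<Longrightarrow> g (last xs) = last xs \<Longrightarrow> \<exists>k. (g ^^ k) (hd xs) = last xs"
proof (induction xs)
  case Nil
  then show ?case by (simp add: walk_def)
next
  case (Cons z ys)
  show ?case
  proof (cases "ys = []")
    case True
    then show ?thesis by (intro exI[of _ 0]) simp
  next
    case False
    with Cons.prems have "walk E ys" and edge: "{z, hd ys} \<in> E" by (auto simp: walk_Cons)
    with Cons.IH Cons.prems(2) False obtain k where k: "(g ^^ k) (hd ys) = last ys" by auto
    from edge assms obtain v where "{z, hd ys} = {v, g v}" by blast
    then consider "g z = hd ys" | "g (hd ys) = z" by (auto simp: doubleton_eq_iff)
    then show ?thesis
    proof cases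
      case 1
      then have "(g ^^ Suc k) z = last ys" using k by (simp add: funpow_Suc_right del: funpow.simps)
      then show ?thesis using False by (metis last_ConsR list.sel(1))
    next
      case 2
      show ?thesis
      proof (cases k)
        case 0
        then show ?thesis using 2 k Cons.prems(2) False by (intro exI[of _ 0]) simp
      next
        case (Suc k')
        then have "(g ^^ k') z = last ys"
          using 2 k by (simp add: funpow_Suc_right del: funpow.simps)
        then show ?thesis using False by (metis last_ConsR list.sel(1))
      qed
    qed
  qed
qed

lemma funpow_fixpoint: "g p = p \<Longrightarrow> (g ^^ k) p = p"
  by (induction k) auto

lemma funpow_reaches_unique_fixpoint:
  assumes "g p = p" "g q = q" "(g ^^ k) a = p" "(g ^^ m) a = q"
  shows "p = q"
proof -
  have "(g ^^ (m + k)) a = p" using assms(1,3) by (simp add: funpow_add funpow_fixpoint)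
  moreover have "(g ^^ (k + m)) a = q" using assms(2,4) by (simp add: funpow_add funpow_fixpoint)
  ultimately show ?thesis by (simp add: add.commute)
qed

section \<open>Costs\<close>

definition far_players :: "nat \<Rightarrow> nat \<Rightarrow> (nat \<Rightarrow> nat set) \<Rightarrow> nat \<Rightarrow> nat set" where
  "far_players n \<beta> S u = {v \<in> players n. gdist (outcome_graph n S) u v > enat \<beta>}"

lemma finite_players [simp]: "finite (players n)"
  by (simp add: players_def)

lemma players_other: "2 \<le> n \<Longrightarrow> \<exists>x \<in> players n. x \<noteq> u"
proof (cases "u = 1")
  case True
  moreover assume "2 \<le> n"
  ultimately show ?thesis by (intro bexI[of _ 2]) (simp_all add: players_def)
next
  case False
  moreover assume "2 \<le> n"
  ultimately show ?thesis by (intro bexI[of _ 1]) (simp_all add: players_def)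
qed

lemma cost_eq: "cost n w \<alpha> \<beta> S u = \<alpha> * real (card (S u)) + sum w (far_players n \<beta> S u)"
  by (simp add: cost_def far_players_def)

lemma far_players_subset: "far_players n \<beta> S u \<subseteq> players n - {u}"
  by (auto simp: far_players_def zero_enat_def)

lemma far_players_isolated:
  "u \<notin> \<Union>(outcome_graph n S) \<Longrightarrow> far_players n \<beta> S u = players n - {u}"
  using far_players_subset by (auto simp: far_players_def gdist_isolated)

lemma cost_le_if_far_players_subset:
  assumes "\<forall>v \<in> players n. 0 \<le> w v" "far_players n \<beta> S u \<subseteq> B" "B \<subseteq> players n"
  shows "cost n w \<alpha> \<beta> S u \<le> \<alpha> * real (card (S u)) + sum w B"
proof -
  have "sum w (far_players n \<beta> S u) \<le> sum w B"
    using assms finite_subset[OF assms(3)] by (intro sum_mono2) auto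
  then show ?thesis by (simp add: cost_eq)
qed

lemma cost_ge_if_subset_far_players:
  assumes "\<forall>v \<in> players n. 0 \<le> w v" "A \<subseteq> far_players n \<beta> S u"
  shows "\<alpha> * real (card (S u)) + sum w A \<le> cost n w \<alpha> \<beta> S u"
proof -
  have "sum w A \<le> sum w (far_players n \<beta> S u)"
    using assms far_players_subset[of n \<beta> S u] by (intro sum_mono2) (auto intro: finite_subset)
  then show ?thesis by (simp add: cost_eq)
qed

lemma sum_players_remove:
  fixes w :: "nat \<Rightarrow> real"
  shows "u \<in> players n \<Longrightarrow> sum w (players n - {u}) = sum w (players n) - w u"
  by (simp add: sum_diff1)

lemma cost_isolated:
  assumes "u \<in> players n" "u \<notin> \<Union>(outcome_graph n S)"
  shows "cost n w \<alpha> \<beta> S u = sum w (players n) - w u"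
proof -
  have "S u = {}" using assms by (auto simp: outcome_graph_def)
  then show ?thesis using assms by (simp add: cost_eq far_players_isolated sum_players_remove)
qed

lemma nash_eq_cost_le:
  assumes "\<forall>v \<in> players n. 0 \<le> w v" "nash_eq n w \<alpha> \<beta> S" "u \<in> players n"
  shows "cost n w \<alpha> \<beta> S u \<le> sum w (players n) - w u"
proof -
  have "cost n w \<alpha> \<beta> S u \<le> cost n w \<alpha> \<beta> (S(u := {})) u"
    using assms(2,3) by (simp add: nash_eq_def)
  also have "\<dots> \<le> sum w (players n - {u})"
    using cost_le_if_far_players_subset[OF assms(1) far_players_subset[of n \<beta> "S(u := {})" u]]
    by simp
  finally show ?thesis using assms(3) by (simp add: sum_players_remove)
qed

lemma links_cost_le_cost:
  assumes "\<forall>v \<in> players n. 0 \<le> w v"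
  shows "\<alpha> * real (card (S u)) \<le> cost n w \<alpha> \<beta> S u"
  using cost_ge_if_subset_far_players[OF assms, of "{}"] by simp

lemma nash_eq_links_cost_le:
  assumes "\<forall>v \<in> players n. 0 \<le> w v" "nash_eq n w \<alpha> \<beta> S" "u \<in> players n"
  shows "\<alpha> * real (card (S u)) \<le> sum w (players n) - w u"
  using links_cost_le_cost[OF assms(1), of \<alpha> S u \<beta>] nash_eq_cost_le[OF assms] by linarith

lemma nash_eq_finite_links: "nash_eq n w \<alpha> \<beta> S \<Longrightarrow> u \<in> players n \<Longrightarrow> finite (S u)"
  unfolding nash_eq_def is_profile_def by (meson finite_Diff finite_players finite_subset)

section \<open>The edgeless graph\<close>

lemma nash_eq_empty_profile:
  assumes w_nonneg: "\<forall>v \<in> players n. 0 \<le> w v" and w_le: "\<forall>v \<in> players n. w v \<le> \<alpha>"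
  shows "nash_eq n w \<alpha> \<beta> (\<lambda>_. {})"
  unfolding nash_eq_def
proof (intro conjI ballI allI impI)
  show "is_profile n (\<lambda>_. {})" by (simp add: is_profile_def)
  fix u T assume u: "u \<in> players n" and T: "T \<subseteq> players n - {u}"
  let ?S = "(\<lambda>_. {}) :: nat \<Rightarrow> nat set"
  have "\<Union>(outcome_graph n (?S(u := T))) \<subseteq> insert u T"
    by (auto simp: outcome_graph_def split: if_splits)
  then have "gdist (outcome_graph n (?S(u := T))) u v = \<infinity>" if "v \<notin> insert u T" for v
    using that gdist_isolated[of u v] by blast
  then have "players n - {u} - T \<subseteq> far_players n \<beta> (?S(u := T)) u"
    by (auto simp: far_players_def)
  from cost_ge_if_subset_far_players[OF w_nonneg this]
  have "\<alpha> * real (card T) + sum w (players n - {u} - T) \<le> cost n w \<alpha> \<beta> (?S(u := T)) u"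
    by simp
  moreover have "sum w (players n - {u} - T) = sum w (players n) - w u - sum w T"
    using T u by (simp add: sum_diff sum_players_remove)
  moreover have "sum w T \<le> \<alpha> * real (card T)"
    using T w_le sum_bounded_above[of T w \<alpha>] by (auto simp: mult.commute)
  moreover have "cost n w \<alpha> \<beta> ?S u = sum w (players n) - w u"
    using u by (simp add: cost_isolated outcome_graph_def)
  ultimately show "cost n w \<alpha> \<beta> ?S u \<le> cost n w \<alpha> \<beta> (?S(u := T)) u" by linarith
qed

lemma nash_eq_empty_graph_weight_le:
  assumes w_nonneg: "\<forall>v \<in> players n. 0 \<le> w v" and "1 \<le> \<beta>"
    and ne: "nash_eq n w \<alpha> \<beta> S" and empty: "outcome_graph n S = {}"
    and u: "u \<in> players n" and v: "v \<in> players n" "u \<noteq> v"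
  shows "w v \<le> \<alpha>"
proof -
  let ?S' = "S(u := {v})"
  have "walk (outcome_graph n ?S') [u, v]"
    using u v by (auto simp: walk_def outcome_graph_def)
  then have "gdist (outcome_graph n ?S') u v \<le> enat \<beta>"
    using gdist_le_walk[of _ "[u, v]"] \<open>1 \<le> \<beta>\<close> by (fastforce intro: order_trans)
  then have "far_players n \<beta> ?S' u \<subseteq> players n - {u, v}"
    using far_players_subset[of n \<beta> ?S' u] by (auto simp: far_players_def)
  from cost_le_if_far_players_subset[OF w_nonneg this Diff_subset, where \<alpha> = \<alpha>]
  have "cost n w \<alpha> \<beta> ?S' u \<le> \<alpha> + (sum w (players n) - w u - w v)"
    using u v by (simp add: sum_diff)
  moreover have "cost n w \<alpha> \<beta> S u \<le> cost n w \<alpha> \<beta> ?S' u"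
    using ne u v by (simp add: nash_eq_def)
  moreover have "cost n w \<alpha> \<beta> S u = sum w (players n) - w u"
    using u empty by (simp add: cost_isolated)
  ultimately show ?thesis by linarith
qed

lemma nash_eq_graph_empty_iff:
  assumes w_nonneg: "\<forall>v \<in> players n. 0 \<le> w v" and "1 \<le> \<beta>" "2 \<le> n"
  shows "nash_eq_graph n w \<alpha> \<beta> {} \<longleftrightarrow> (\<forall>v \<in> players n. w v \<le> \<alpha>)"
proof
  assume "nash_eq_graph n w \<alpha> \<beta> {}"
  then obtain S where S: "nash_eq n w \<alpha> \<beta> S" "outcome_graph n S = {}"
    unfolding nash_eq_graph_def by blast
  show "\<forall>v \<in> players n. w v \<le> \<alpha>"
  proof
    fix v assume v: "v \<in> players n"
    obtain u where u: "u \<in> players n" "u \<noteq> v" using players_other[OF \<open>2 \<le> n\<close>] by blast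
    show "w v \<le> \<alpha>" using nash_eq_empty_graph_weight_le[OF w_nonneg \<open>1 \<le> \<beta>\<close> S u(1) v u(2)] .
  qed
next
  assume "\<forall>v \<in> players n. w v \<le> \<alpha>"
  moreover have "outcome_graph n (\<lambda>_. {}) = {}" by (simp add: outcome_graph_def)
  ultimately show "nash_eq_graph n w \<alpha> \<beta> {}"
    using nash_eq_empty_profile[OF w_nonneg] unfolding nash_eq_graph_def by blast
qed

section \<open>Stars\<close>

definition star_profile :: "nat \<Rightarrow> nat \<Rightarrow> nat \<Rightarrow> nat set" where
  "star_profile n c v = (if v \<in> players n \<and> v \<noteq> c then {c} else {})"

lemma star_profile_edge:
  "c \<in> players n \<Longrightarrow> v \<in> players n \<Longrightarrow> v \<noteq> c \<Longrightarrow> {v, c} \<in> outcome_graph n (star_profile n c)"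
  by (auto simp: outcome_graph_def star_profile_def)

lemma far_players_star_profile:
  assumes "2 \<le> \<beta>" "c \<in> players n" "u \<in> players n"
  shows "far_players n \<beta> (star_profile n c) u = {}"
proof -
  let ?E = "outcome_graph n (star_profile n c)"
  have dist_le_2: "gdist ?E u v \<le> enat 2" if v: "v \<in> players n" for v
  proof -
    consider "u = v" | "u \<noteq> v" "u = c \<or> v = c" | "u \<noteq> c" "v \<noteq> c" by blast
    then show ?thesis
    proof cases
      case 1
      then show ?thesis by simp
    next
      case 2
      then have "{u, v} \<in> ?E"
        using star_profile_edge[OF assms(2)] assms(3) v by (metis insert_commute)
      then have "walk ?E [u, v]" by (simp add: walk_def)
      then have "gdist ?E u v \<le> enat 1" using gdist_le_walk[of ?E "[u, v]" u v] by simp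
      then show ?thesis by (rule order_trans) simp
    next
      case 3
      then have "{u, c} \<in> ?E" "{c, v} \<in> ?E"
        using star_profile_edge[OF assms(2)] assms(3) v by (metis insert_commute)+
      then have "walk ?E [u, c, v]" by (simp add: walk_def less_Suc_eq nth_Cons split: nat.splits)
      then show ?thesis using gdist_le_walk[of ?E "[u, c, v]"] by (simp add: numeral_2_eq_2)
    qed
  qed
  have "gdist ?E u v \<le> enat \<beta>" if "v \<in> players n" for v
    using dist_le_2[OF that] assms(1) by (meson enat_ord_simps(1) order_trans)
  then show ?thesis by (auto simp: far_players_def leD)
qed

lemma nash_eq_star_profile:
  assumes w_nonneg: "\<forall>v \<in> players n. 0 \<le> w v" and "0 \<le> \<alpha>" and "2 \<le> \<beta>"
    and c: "c \<in> players n" and leaves: "\<forall>u \<in> players n - {c}. \<alpha> \<le> sum w (players n) - w u"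
  shows "nash_eq n w \<alpha> \<beta> (star_profile n c)"
  unfolding nash_eq_def
proof (intro conjI ballI allI impI)
  show "is_profile n (star_profile n c)" using c by (auto simp: is_profile_def star_profile_def)
  fix u T assume u: "u \<in> players n" and T: "T \<subseteq> players n - {u}"
  let ?S = "star_profile n c"
  have cost_star: "cost n w \<alpha> \<beta> ?S u = \<alpha> * real (card (?S u))"
    by (simp add: cost_eq far_players_star_profile[OF \<open>2 \<le> \<beta>\<close> c u])
  have cost_dev: "\<alpha> * real (card T) \<le> cost n w \<alpha> \<beta> (?S(u := T)) u"
    using links_cost_le_cost[OF w_nonneg, of \<alpha> "?S(u := T)" u \<beta>] by simp
  show "cost n w \<alpha> \<beta> ?S u \<le> cost n w \<alpha> \<beta> (?S(u := T)) u"
  proof (cases "u = c")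
    case True
    moreover have "0 \<le> \<alpha> * real (card T)" using \<open>0 \<le> \<alpha>\<close> by simp
    ultimately show ?thesis using cost_star cost_dev by (simp add: star_profile_def)
  next
    case leaf: False
    then have cost_leaf: "cost n w \<alpha> \<beta> ?S u = \<alpha>" using cost_star u by (simp add: star_profile_def)
    show ?thesis
    proof (cases "T = {}")
      case True
      have "u \<notin> \<Union>(outcome_graph n (?S(u := {})))"
        using leaf by (auto simp: outcome_graph_def star_profile_def)
      then have "cost n w \<alpha> \<beta> (?S(u := T)) u = sum w (players n) - w u"
        using u True by (simp add: cost_isolated)
      then show ?thesis using cost_leaf leaves u leaf by simp
    next
      case False
      moreover have "finite T" using T by (meson finite_Diff finite_players finite_subset)
      ultimately have "\<alpha> \<le> \<alpha> * real (card T)"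
        using \<open>0 \<le> \<alpha>\<close> by (simp add: Suc_leI card_gt_0_iff mult_le_cancel_left1)
      then show ?thesis using cost_leaf cost_dev by linarith
    qed
  qed
qed

lemma card_Collect_le_1_imp_ex:
  assumes "finite A" "A \<noteq> {}" "card {x \<in> A. P x} \<le> 1"
  shows "\<exists>c \<in> A. \<forall>x \<in> A - {c}. \<not> P x"
proof (cases "\<exists>c \<in> A. P c")
  case True
  then obtain c where "c \<in> A" "P c" by blast
  moreover have "x = c" if "x \<in> A" "P x" for x
    using assms(1,3) that \<open>c \<in> A\<close> \<open>P c\<close> by (auto simp: card_le_Suc0_iff_eq)
  ultimately show ?thesis by blast
next
  case False
  then show ?thesis using assms(2) by blast
qed

lemma nonempty_nash_eq_graph_if_card_link_averse_players_le_1: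
  assumes w_nonneg: "\<forall>v \<in> players n. 0 \<le> w v" and "0 \<le> \<alpha>" "2 \<le> \<beta>" "2 \<le> n"
    and "card {u \<in> players n. sum w (players n) - w u < \<alpha>} \<le> 1"
  shows "\<exists>E. E \<noteq> {} \<and> nash_eq_graph n w \<alpha> \<beta> E"
proof -
  have "players n \<noteq> {}" using players_other[OF \<open>2 \<le> n\<close>] by blast
  then have "\<exists>c \<in> players n. \<forall>u \<in> players n - {c}. \<not> sum w (players n) - w u < \<alpha>"
    using assms(5) by (intro card_Collect_le_1_imp_ex[OF finite_players])
  then obtain c where c: "c \<in> players n" "\<forall>u \<in> players n - {c}. \<alpha> \<le> sum w (players n) - w u"
    by (auto simp: not_less)
  obtain x where "x \<in> players n" "x \<noteq> c" using players_other[OF \<open>2 \<le> n\<close>] by blast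
  then have "{x, c} \<in> outcome_graph n (star_profile n c)" by (rule star_profile_edge[OF c(1)])
  moreover have "nash_eq n w \<alpha> \<beta> (star_profile n c)"
    using nash_eq_star_profile[OF w_nonneg \<open>0 \<le> \<alpha>\<close> \<open>2 \<le> \<beta>\<close> c] .
  ultimately show ?thesis unfolding nash_eq_graph_def by blast
qed

section \<open>Players who never buy links\<close>

lemma nash_eq_buyer_reaches:
  assumes w_nonneg: "\<forall>v \<in> players n. 0 \<le> w v" and "0 \<le> \<alpha>"
    and ne: "nash_eq n w \<alpha> \<beta> S" and a: "a \<in> players n" "S a \<noteq> {}"
    and t: "t \<in> players n" "sum w (players n) - w t < \<alpha>"
  shows "\<exists>xs. walk (outcome_graph n S) xs \<and> hd xs = a \<and> last xs = t"
proof (rule ccontr)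
  assume "\<not> ?thesis"
  then have "gdist (outcome_graph n S) a t = \<infinity>" by (simp add: gdist_eq_infinity_iff)
  then have "{t} \<subseteq> far_players n \<beta> S a" using t by (simp add: far_players_def)
  from cost_ge_if_subset_far_players[OF w_nonneg this]
  have "\<alpha> * real (card (S a)) + w t \<le> cost n w \<alpha> \<beta> S a" by simp
  moreover have "\<alpha> \<le> \<alpha> * real (card (S a))"
    using a nash_eq_finite_links[OF ne a(1)] \<open>0 \<le> \<alpha>\<close>
    by (simp add: Suc_leI card_gt_0_iff mult_le_cancel_left1)
  moreover have "cost n w \<alpha> \<beta> S a \<le> sum w (players n) - w a"
    using nash_eq_cost_le[OF w_nonneg ne a(1)] .
  ultimately show False using t(2) w_nonneg a(1) by force
qed

lemma nash_eq_link_averse_no_links: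
  assumes "\<forall>v \<in> players n. 0 \<le> w v" "0 < \<alpha>" "nash_eq n w \<alpha> \<beta> S"
    and "u \<in> players n" "sum w (players n) - w u < \<alpha>"
  shows "S u = {}"
proof -
  have "\<alpha> * real (card (S u)) < \<alpha> * 1"
    using nash_eq_links_cost_le[OF assms(1,3,4)] assms(5) by simp
  then show ?thesis using assms(2) nash_eq_finite_links[OF assms(3,4)] by simp
qed

lemma nash_eq_links_le_1_if_two_link_averse_players:
  assumes w_nonneg: "\<forall>v \<in> players n. 0 \<le> w v" and "0 < \<alpha>" and ne: "nash_eq n w \<alpha> \<beta> S"
    and u1: "u1 \<in> players n" "sum w (players n) - w u1 < \<alpha>"
    and u2: "u2 \<in> players n" "sum w (players n) - w u2 < \<alpha>"
    and "u1 \<noteq> u2" and v: "v \<in> players n"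
  shows "card (S v) \<le> 1"
proof (cases "v \<in> {u1, u2}")
  case True
  then show ?thesis
    using nash_eq_link_averse_no_links[OF w_nonneg \<open>0 < \<alpha>\<close> ne] u1 u2 by auto
next
  case False
  have "sum w {u1, u2, v} \<le> sum w (players n)"
    using u1 u2 v w_nonneg by (intro sum_mono2) auto
  then have "sum w (players n) - w v < \<alpha> * 2"
    using u1 u2 v w_nonneg False \<open>u1 \<noteq> u2\<close> by auto
  then have "\<alpha> * real (card (S v)) < \<alpha> * 2"
    using nash_eq_links_cost_le[OF w_nonneg ne v] by linarith
  then show ?thesis using \<open>0 < \<alpha>\<close> by simp
qed

lemma nash_eq_graph_empty_if_two_link_averse_players:
  assumes w_nonneg: "\<forall>v \<in> players n. 0 \<le> w v" and "0 < \<alpha>" and "nash_eq_graph n w \<alpha> \<beta> E"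
    and u1: "u1 \<in> players n" "sum w (players n) - w u1 < \<alpha>"
    and u2: "u2 \<in> players n" "sum w (players n) - w u2 < \<alpha>"
    and "u1 \<noteq> u2"
  shows "E = {}"
proof (rule ccontr)
  let ?W = "sum w (players n)"
  obtain S where ne: "nash_eq n w \<alpha> \<beta> S" and E: "E = outcome_graph n S"
    using \<open>nash_eq_graph n w \<alpha> \<beta> E\<close> by (auto simp: nash_eq_graph_def)
  assume "E \<noteq> {}"
  then obtain a b where a: "a \<in> players n" "b \<in> S a" by (auto simp: E outcome_graph_def)
  note no_links = nash_eq_link_averse_no_links[OF w_nonneg \<open>0 < \<alpha>\<close> ne]
  define g where "g v = (if S v = {} then v else the_elem (S v))" for v
  have "outcome_graph n S \<subseteq> range (\<lambda>v. {v, g v})"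
  proof
    fix e assume "e \<in> outcome_graph n S"
    then obtain x y where e: "e = {x, y}" "x \<in> players n" "y \<in> S x"
      by (auto simp: outcome_graph_def)
    then have "S x = {y}"
      using nash_eq_links_le_1_if_two_link_averse_players[OF w_nonneg \<open>0 < \<alpha>\<close> ne u1 u2
          \<open>u1 \<noteq> u2\<close> e(2)] nash_eq_finite_links[OF ne e(2)]
      by (auto simp: card_le_Suc0_iff_eq)
    then show "e \<in> range (\<lambda>v. {v, g v})" using e by (auto simp: g_def)
  qed
  note walk_to_fixpoint = walk_funpow_fixpoint[OF this]
  have fixpoint: "g u = u" if "u \<in> players n" "?W - w u < \<alpha>" for u
    using no_links[OF that] by (simp add: g_def)
  have "\<exists>k. (g ^^ k) a = u" if u: "u \<in> players n" "?W - w u < \<alpha>" for u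
  proof -
    obtain xs where xs: "walk (outcome_graph n S) xs" "hd xs = a" "last xs = u"
      using nash_eq_buyer_reaches[OF w_nonneg _ ne a(1) _ u] a(2) \<open>0 < \<alpha>\<close> by auto
    then show ?thesis using walk_to_fixpoint[OF xs(1)] fixpoint[OF u] by simp
  qed
  then obtain k m where "(g ^^ k) a = u1" "(g ^^ m) a = u2" using u1 u2 by meson
  with fixpoint[OF u1] fixpoint[OF u2] have "u1 = u2" by (rule funpow_reaches_unique_fixpoint)
  with \<open>u1 \<noteq> u2\<close> show False by simp
qed

theorem corollary1:
  fixes n \<beta> :: nat and w :: "nat \<Rightarrow> real" and \<alpha> :: real
  assumes w_pos: "\<forall>u \<in> players n. w u > 0"
    and \<alpha>_pos: "\<alpha> > 0"
    and \<beta>_ge: "1 \<le> \<beta>" and \<beta>_le: "\<beta> \<le> n - 1"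
    and \<beta>_gt: "\<beta> > 1"
  shows "(\<forall>E. nash_eq_graph n w \<alpha> \<beta> E \<longleftrightarrow> E = {}) \<longleftrightarrow>
         (\<alpha> \<ge> Max (w ` players n) \<and>
          card {u \<in> players n. \<alpha> > (\<Sum>v \<in> players n. w v) - w u} > 1)"
proof -
  let ?P = "players n" and ?W = "\<Sum>v \<in> players n. w v"
  let ?averse = "{u \<in> ?P. ?W - w u < \<alpha>}"
  have w_nonneg: "\<forall>v \<in> ?P. 0 \<le> w v" using w_pos by (simp add: less_imp_le)
  have "2 \<le> n" "2 \<le> \<beta>" using \<beta>_le \<beta>_gt by linarith+
  note empty_iff = nash_eq_graph_empty_iff[OF w_nonneg \<beta>_ge \<open>2 \<le> n\<close>, where \<alpha> = \<alpha>]
  have max_iff: "Max (w ` ?P) \<le> \<alpha> \<longleftrightarrow> (\<forall>v \<in> ?P. w v \<le> \<alpha>)"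
    using players_other[OF \<open>2 \<le> n\<close>] by (subst Max_le_iff) auto
  show ?thesis
  proof
    assume unique: "\<forall>E. nash_eq_graph n w \<alpha> \<beta> E \<longleftrightarrow> E = {}"
    then have "\<not> card ?averse \<le> 1"
      using nonempty_nash_eq_graph_if_card_link_averse_players_le_1[OF w_nonneg
          less_imp_le[OF \<alpha>_pos] \<open>2 \<le> \<beta>\<close> \<open>2 \<le> n\<close>]
      by blast
    then show "Max (w ` ?P) \<le> \<alpha> \<and> 1 < card ?averse" using unique empty_iff max_iff by simp
  next
    assume "Max (w ` ?P) \<le> \<alpha> \<and> 1 < card ?averse"
    then have empty: "nash_eq_graph n w \<alpha> \<beta> {}" and "\<not> card ?averse \<le> Suc 0"
      using empty_iff max_iff by auto
    then obtain u1 u2 where "u1 \<in> ?averse" "u2 \<in> ?averse" "u1 \<noteq> u2"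
      using card_le_Suc0_iff_eq[of ?averse] by auto
    then show "\<forall>E. nash_eq_graph n w \<alpha> \<beta> E \<longleftrightarrow> E = {}"
      using empty nash_eq_graph_empty_if_two_link_averse_players[OF w_nonneg \<alpha>_pos] by blast
  qed
qed

end
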